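(* Let $\mathbb{K}$ be a field and $f=a_0(x)+a_1(x)y+\cdots+a_n(x)y^n\in\mathbb{K}[x,y]$ with $n\geq 2$, $a_1,\ldots,a_{n-1}\in\mathbb{K}[x]$, $a_0,a_n\in\mathbb{K}$, $a_0a_n\neq 0$, and suppose there exists an index $j$ with $1\leq j\leq n-1$ such that $\deg a_j>\max_{i\neq j}\deg a_i$. Then $f$ is a product of at most $\min\{j,n-j\}$ irreducible polynomials over $\mathbb{K}[x]$. In particular, if $j=1$ or $j=n-1$, then $f$ is irreducible over $\mathbb{K}[x]$.
   Context: $f$ is regarded as a polynomial in $y$ with coefficients in $\mathbb{K}[x]$; "a product of at most $k$ irreducible polynomials over $\mathbb{K}[x]$" means that in the factorization of $f$ into irreducible elements of $\mathbb{K}[x][y]$ the number of factors, counted with multiplicities, is at most $k$. *)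

theory Defs
  imports "HOL-Computational_Algebra.Computational_Algebra"
begin

end

theory Submission
  imports Defs
begin

(* For g in K[x][y] let deg_x g be the largest x-degree of its coefficients and let L g in K[y]
   collect the coefficients of x^(deg_x g). Both are multiplicative, and the dominance hypothesis
   says L f = c y^j. In a factorisation of f into non-units every factor p has unit coefficients
   at y^0 and at its top y-degree; hence L p has y-degree at least 1 and y-order below deg_y p.
   Summing over the factors bounds their number by deg L f = j and by deg_y f - ord L f = n - j. *)

definition x_degree :: "'a::zero poly poly \<Rightarrow> nat" where
  "x_degree g = Max ((\<lambda>i. degree (coeff g i)) ` {..degree g})"

lemma degree_coeff_le_x_degree: "degree (coeff g i) \<le> x_degree g"
proof (cases "i \<le> degree g")
  case True
  then show ?thesis unfolding x_degree_def by (intro Max_ge) auto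
next
  case False
  then show ?thesis by (simp add: coeff_eq_0)
qed

lemma x_degree_le: "(\<And>i. degree (coeff g i) \<le> d) \<Longrightarrow> x_degree g \<le> d"
  unfolding x_degree_def by (intro Max.boundedI) auto

lemma x_degree_attained:
  assumes "g \<noteq> 0"
  obtains i where "coeff g i \<noteq> 0" "degree (coeff g i) = x_degree g"
proof -
  have "x_degree g \<in> (\<lambda>i. degree (coeff g i)) ` {..degree g}"
    unfolding x_degree_def by (intro Max_in) auto
  then obtain i where i: "degree (coeff g i) = x_degree g" by auto
  show thesis
  proof (cases "coeff g i = 0")
    case True
    then have "degree (lead_coeff g) = x_degree g"
      using i degree_coeff_le_x_degree[of g "degree g"] by simp
    then show thesis using that[of "degree g"] assms by simp
  qed (use that i in auto)
qed

definition x_leading_part :: "'a::zero poly poly \<Rightarrow> 'a poly" where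
  "x_leading_part g = map_poly (\<lambda>c. coeff c (x_degree g)) g"

lemma coeff_x_leading_part: "coeff (x_leading_part g) i = coeff (coeff g i) (x_degree g)"
  by (simp add: x_leading_part_def coeff_map_poly)

lemma coeff_x_leading_part_neq_0_iff:
  "coeff (x_leading_part g) i \<noteq> 0 \<longleftrightarrow> coeff g i \<noteq> 0 \<and> degree (coeff g i) = x_degree g"
proof
  assume nz: "coeff (x_leading_part g) i \<noteq> 0"
  then have "x_degree g \<le> degree (coeff g i)"
    unfolding coeff_x_leading_part by (rule le_degree)
  with nz show "coeff g i \<noteq> 0 \<and> degree (coeff g i) = x_degree g"
    using degree_coeff_le_x_degree[of g i] by (auto simp: coeff_x_leading_part)
qed (metis coeff_x_leading_part leading_coeff_0_iff)

lemma x_leading_part_eq_0_iff [simp]: "x_leading_part g = 0 \<longleftrightarrow> g = 0"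
proof
  assume L: "x_leading_part g = 0"
  show "g = 0"
  proof (rule ccontr)
    assume "g \<noteq> 0"
    then obtain i where "coeff g i \<noteq> 0" "degree (coeff g i) = x_degree g"
      by (rule x_degree_attained)
    then show False using L coeff_x_leading_part_neq_0_iff[of g i] by simp
  qed
qed (simp add: x_leading_part_def)

lemma x_leading_part_1 [simp]: "x_leading_part (1 :: 'a::comm_semiring_1 poly poly) = 1"
proof -
  have "x_degree (1 :: 'a poly poly) \<le> 0"
  proof (rule x_degree_le)
    show "degree (coeff (1 :: 'a poly poly) i) \<le> 0" for i
      by (cases "i = 0") auto
  qed
  then show ?thesis
    by (intro poly_eqI) (simp add: coeff_x_leading_part coeff_1)
qed

lemma coeff_mult_at_degree_bounds:
  fixes p q :: "'a::comm_semiring_0 poly"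
  assumes "degree p \<le> d" "degree q \<le> e"
  shows "coeff (p * q) (d + e) = coeff p d * coeff q e"
proof (cases "degree p = d \<and> degree q = e")
  case True
  then show ?thesis using coeff_mult_degree_sum[of p q] by simp
next
  case False
  then have "degree (p * q) < d + e" "coeff p d = 0 \<or> coeff q e = 0"
    using assms degree_mult_le[of p q] by (auto simp: coeff_eq_0)
  then show ?thesis by (auto simp: coeff_eq_0)
qed

lemma degree_coeff_mult_le:
  fixes g h :: "'a::comm_semiring_0 poly poly"
  assumes "\<And>i. degree (coeff g i) \<le> d" "\<And>i. degree (coeff h i) \<le> e"
  shows "degree (coeff (g * h) k) \<le> d + e"
  unfolding coeff_mult
proof (rule degree_sum_le)
  fix i
  show "degree (coeff g i * coeff h (k - i)) \<le> d + e"
    using degree_mult_le add_mono[OF assms(1) assms(2)] by (rule order.trans)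
qed simp

lemma map_poly_coeff_mult:
  fixes g h :: "'a::comm_semiring_0 poly poly"
  assumes "\<And>i. degree (coeff g i) \<le> d" "\<And>i. degree (coeff h i) \<le> e"
  shows "map_poly (\<lambda>c. coeff c (d + e)) (g * h)
       = map_poly (\<lambda>c. coeff c d) g * map_poly (\<lambda>c. coeff c e) h"
  by (rule poly_eqI)
    (simp add: coeff_map_poly coeff_mult[of g h] coeff_mult[of "map_poly _ g"] coeff_sum
      coeff_mult_at_degree_bounds assms)

lemma x_degree_mult:
  fixes g h :: "'a::idom poly poly"
  assumes "g \<noteq> 0" "h \<noteq> 0"
  shows "x_degree (g * h) = x_degree g + x_degree h"
proof (rule antisym)
  show "x_degree (g * h) \<le> x_degree g + x_degree h"
    by (intro x_degree_le degree_coeff_mult_le degree_coeff_le_x_degree)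
  have "map_poly (\<lambda>c. coeff c (x_degree g + x_degree h)) (g * h)
      = x_leading_part g * x_leading_part h"
    unfolding x_leading_part_def by (intro map_poly_coeff_mult degree_coeff_le_x_degree)
  also have "\<dots> \<noteq> 0" using assms by simp
  finally obtain k where "coeff (coeff (g * h) k) (x_degree g + x_degree h) \<noteq> 0"
    by (metis (no_types, lifting) coeff_map_poly leading_coeff_0_iff coeff_0)
  then show "x_degree g + x_degree h \<le> x_degree (g * h)"
    using le_degree order.trans degree_coeff_le_x_degree by blast
qed

lemma x_leading_part_mult:
  fixes g h :: "'a::idom poly poly"
  shows "x_leading_part (g * h) = x_leading_part g * x_leading_part h"
proof (cases "g = 0 \<or> h = 0")
  case False
  then have "x_degree (g * h) = x_degree g + x_degree h" by (simp add: x_degree_mult)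
  then show ?thesis
    unfolding x_leading_part_def by (simp add: map_poly_coeff_mult degree_coeff_le_x_degree)
qed auto

lemma x_leading_part_dominant_coeff:
  fixes g :: "'a::zero poly poly"
  assumes "\<And>i. i \<noteq> j \<Longrightarrow> degree (coeff g i) < degree (coeff g j)"
  shows "x_leading_part g = monom (lead_coeff (coeff g j)) j"
proof -
  have "degree (coeff g i) \<le> degree (coeff g j)" for i
    using assms[of i] by (cases "i = j") auto
  then have "x_degree g = degree (coeff g j)"
    by (intro antisym x_degree_le degree_coeff_le_x_degree)
  then show ?thesis
    using assms by (intro poly_eqI) (simp add: coeff_x_leading_part coeff_monom coeff_eq_0)
qed

lemma degree_x_leading_part_pos:
  fixes g :: "'a::zero poly poly"
  assumes "0 < degree g" "degree (coeff g 0) = 0"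
  shows "0 < degree (x_leading_part g)"
proof -
  have "g \<noteq> 0" using assms(1) by auto
  obtain i where "0 < i" "coeff (x_leading_part g) i \<noteq> 0"
  proof (cases "x_degree g = 0")
    case True
    then show thesis
      using that[of "degree g"] assms(1) \<open>g \<noteq> 0\<close> degree_coeff_le_x_degree[of g "degree g"]
      by (simp add: coeff_x_leading_part_neq_0_iff)
  next
    case False
    obtain i where "coeff g i \<noteq> 0" "degree (coeff g i) = x_degree g"
      using \<open>g \<noteq> 0\<close> by (rule x_degree_attained)
    then show thesis
      using that[of i] False assms(2) by (cases i) (auto simp: coeff_x_leading_part_neq_0_iff)
  qed
  then show ?thesis using le_degree less_le_trans by blast
qed

lemma order_0_le_if_coeff_neq_0:
  fixes p :: "'a::idom poly"
  assumes "coeff p i \<noteq> 0"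
  shows "order 0 p \<le> i"
proof (rule ccontr)
  assume "\<not> order 0 p \<le> i"
  moreover have "p \<noteq> 0" using assms by auto
  ultimately have "monom 1 (Suc i) dvd p" by (simp add: monom_1_dvd_iff)
  then obtain q where "p = monom 1 (Suc i) * q" by (elim dvdE)
  then have "coeff p i = 0" by (simp add: coeff_monom_mult)
  with assms show False by contradiction
qed

lemma order_x_leading_part_less_degree:
  fixes g :: "'a::idom poly poly"
  assumes "0 < degree g" "coeff g 0 \<noteq> 0" "degree (lead_coeff g) = 0"
  shows "order 0 (x_leading_part g) < degree g"
proof -
  have "g \<noteq> 0" using assms(1) by auto
  obtain i where "i < degree g" "coeff (x_leading_part g) i \<noteq> 0"
  proof (cases "x_degree g = 0")
    case True
    then show thesis
      using that[of 0] assms(1,2) degree_coeff_le_x_degree[of g 0]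
      by (simp add: coeff_x_leading_part_neq_0_iff)
  next
    case False
    obtain i where "coeff g i \<noteq> 0" "degree (coeff g i) = x_degree g"
      using \<open>g \<noteq> 0\<close> by (rule x_degree_attained)
    moreover from this have "i \<le> degree g" by (simp add: le_degree)
    ultimately show thesis
      using that[of i] False assms(3)
      by (cases "i = degree g") (auto simp: coeff_x_leading_part_neq_0_iff)
  qed
  then show ?thesis using order_0_le_if_coeff_neq_0 le_less_trans by blast
qed

lemma size_le_degree_x_leading_part:
  fixes P :: "'a::idom poly poly multiset"
  assumes "\<And>p. p \<in># P \<Longrightarrow> 0 < degree p \<and> degree (coeff p 0) = 0"
  shows "size P \<le> degree (x_leading_part (prod_mset P))"
  using assms
proof (induction P)
  case (add p P)
  have "p \<noteq> 0" "prod_mset P \<noteq> 0" and pos: "0 < degree (x_leading_part p)"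
    using add.prems by (fastforce simp: prod_mset_zero_iff intro: degree_x_leading_part_pos)+
  then have "degree (x_leading_part (prod_mset (add_mset p P)))
      = degree (x_leading_part p) + degree (x_leading_part (prod_mset P))"
    by (simp add: x_leading_part_mult degree_mult_eq)
  moreover have "size P \<le> degree (x_leading_part (prod_mset P))"
    using add.prems by (intro add.IH) simp
  ultimately show ?case using pos by simp
qed simp

lemma size_plus_order_x_leading_part_le_degree:
  fixes P :: "'a::idom poly poly multiset"
  assumes "\<And>p. p \<in># P \<Longrightarrow> 0 < degree p \<and> coeff p 0 \<noteq> 0 \<and> degree (lead_coeff p) = 0"
  shows "size P + order 0 (x_leading_part (prod_mset P)) \<le> degree (prod_mset P)"
  using assms
proof (induction P)
  case empty
  show ?case using order_0_le_if_coeff_neq_0[of 1 0] by simp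
next
  case (add p P)
  have "p \<noteq> 0" "prod_mset P \<noteq> 0" and order_less: "order 0 (x_leading_part p) < degree p"
    using add.prems by (fastforce simp: prod_mset_zero_iff intro: order_x_leading_part_less_degree)+
  then have "order 0 (x_leading_part (prod_mset (add_mset p P)))
      = order 0 (x_leading_part p) + order 0 (x_leading_part (prod_mset P))"
    and "degree (prod_mset (add_mset p P)) = degree p + degree (prod_mset P)"
    by (simp_all add: x_leading_part_mult order_mult degree_mult_eq)
  moreover have "size P + order 0 (x_leading_part (prod_mset P)) \<le> degree (prod_mset P)"
    using add.prems by (intro add.IH) simp
  ultimately show ?case using order_less by simp
qed

lemma irreducible_factorization_exists_if_additive:
  fixes m :: "'a::algebraic_semidom \<Rightarrow> nat" and x :: 'a
  assumes additive: "\<And>a b. a \<noteq> 0 \<Longrightarrow> b \<noteq> 0 \<Longrightarrow> m (a * b) = m a + m b"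
    and unit: "\<And>a. a \<noteq> 0 \<Longrightarrow> m a = 0 \<Longrightarrow> is_unit a"
    and "x \<noteq> 0" "\<not> is_unit x"
  shows "\<exists>P. (\<forall>p\<in>#P. irreducible p) \<and> prod_mset P = x"
  using assms(3,4)
proof (induction "m x" arbitrary: x rule: less_induct)
  case less
  show ?case
  proof (cases "irreducible x")
    case True
    then show ?thesis by (intro exI[of _ "{#x#}"]) simp
  next
    case False
    then obtain a b where ab: "x = a * b" "\<not> is_unit a" "\<not> is_unit b"
      using less.prems by (auto simp: irreducible_def)
    then have "a \<noteq> 0" "b \<noteq> 0" using less.prems(1) by auto
    then have "m x = m a + m b" "m a \<noteq> 0" "m b \<noteq> 0"
      using ab additive unit by auto
    then obtain A B where "\<forall>p\<in>#A. irreducible p" "prod_mset A = a"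
      "\<forall>p\<in>#B. irreducible p" "prod_mset B = b"
      using less.hyps[of a] less.hyps[of b] \<open>a \<noteq> 0\<close> \<open>b \<noteq> 0\<close> ab by auto
    then show ?thesis using ab by (intro exI[of _ "A + B"]) auto
  qed
qed

lemma irreducible_factorization_exists:
  fixes f :: "'a::field poly poly"
  assumes "f \<noteq> 0" "\<not> is_unit f"
  shows "\<exists>P. (\<forall>p\<in>#P. irreducible p) \<and> prod_mset P = f"
proof (rule irreducible_factorization_exists_if_additive[OF _ _ assms])
  show "degree (a * b) + degree (lead_coeff (a * b))
      = (degree a + degree (lead_coeff a)) + (degree b + degree (lead_coeff b))"
    if "a \<noteq> 0" "b \<noteq> 0" for a b :: "'a poly poly"
    unfolding lead_coeff_mult using that by (simp add: degree_mult_eq)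
  show "is_unit a" if "a \<noteq> 0" "degree a + degree (lead_coeff a) = 0" for a :: "'a poly poly"
    using that is_unit_iff_degree[of "lead_coeff a"]
    by (auto simp: is_unit_poly_iff elim!: degree_eq_zeroE)
qed

lemma non_unit_factor_of_unit_end_coeffs:
  fixes p f :: "'a::idom_divide poly poly"
  assumes "p dvd f" "\<not> is_unit p" "is_unit (coeff f 0)" "is_unit (lead_coeff f)"
  shows "0 < degree p \<and> coeff p 0 \<noteq> 0 \<and> degree (coeff p 0) = 0 \<and> degree (lead_coeff p) = 0"
proof -
  obtain q where "f = p * q" using assms(1) by (elim dvdE)
  then have units: "is_unit (coeff p 0)" "is_unit (lead_coeff p)"
    using assms(3,4) by (auto simp: coeff_mult_0 lead_coeff_mult is_unit_mult_iff)
  have "degree p \<noteq> 0"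
  proof
    assume "degree p = 0"
    then have "p = [:lead_coeff p:]" by (elim degree_eq_zeroE) simp
    then show False using assms(2) units(2) is_unit_poly_iff by metis
  qed
  with units show ?thesis by (auto simp: is_unit_poly_iff)
qed

lemma size_non_unit_factorization_le:
  fixes P :: "'a::idom_divide poly poly multiset"
  assumes "\<forall>p\<in>#P. \<not> is_unit p"
    and "is_unit (coeff (prod_mset P) 0)" "is_unit (lead_coeff (prod_mset P))"
  shows "size P \<le> degree (x_leading_part (prod_mset P))"
    and "size P + order 0 (x_leading_part (prod_mset P)) \<le> degree (prod_mset P)"
proof -
  have "0 < degree p \<and> coeff p 0 \<noteq> 0 \<and> degree (coeff p 0) = 0 \<and> degree (lead_coeff p) = 0"
    if "p \<in># P" for p
    using non_unit_factor_of_unit_end_coeffs[OF _ _ assms(2,3)] that assms(1)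
    by (simp add: dvd_prod_mset)
  then show "size P \<le> degree (x_leading_part (prod_mset P))"
    and "size P + order 0 (x_leading_part (prod_mset P)) \<le> degree (prod_mset P)"
    by (simp_all add: size_le_degree_x_leading_part size_plus_order_x_leading_part_le_degree)
qed

theorem theorem6:
  fixes f :: "'a::field poly poly" and n j :: nat
  assumes "degree f = n" and "n \<ge> 2"
    and "degree (coeff f 0) = 0" and "degree (coeff f n) = 0"
    and "coeff f 0 * coeff f n \<noteq> 0"
    and "1 \<le> j" and "j \<le> n - 1"
    and "\<forall>i\<le>n. i \<noteq> j \<longrightarrow> degree (coeff f i) < degree (coeff f j)"
  shows "(\<exists>P. (\<forall>p\<in>#P. irreducible p) \<and> prod_mset P = f \<and> size P \<le> min j (n - j))
         \<and> ((j = 1 \<or> j = n - 1) \<longrightarrow> irreducible f)"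
proof -
  have "f \<noteq> 0" and unit_ends: "is_unit (coeff f 0)" "is_unit (lead_coeff f)"
    using assms(1,3-5) by (auto simp: is_unit_iff_degree)
  have "\<not> is_unit f" using assms(1,2) by (auto simp: is_unit_poly_iff)
  have dominant: "degree (coeff f i) < degree (coeff f j)" if "i \<noteq> j" for i
    using assms(1,6,8) that by (cases "i \<le> n") (auto simp: coeff_eq_0)
  then have "lead_coeff (coeff f j) \<noteq> 0" using assms(6) by fastforce
  moreover have "x_leading_part f = monom (lead_coeff (coeff f j)) j"
    using dominant by (rule x_leading_part_dominant_coeff)
  ultimately have leading: "degree (x_leading_part f) = j" "order 0 (x_leading_part f) = j"
    by (simp_all add: degree_monom_eq)
  have factor_count: "size P \<le> min j (n - j)" if P: "\<forall>p\<in>#P. irreducible p" "prod_mset P = f" for P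
    using size_non_unit_factorization_le[of P] P unit_ends leading assms(1)
    by (auto simp: irreducible_not_unit)
  obtain P where P: "\<forall>p\<in>#P. irreducible p" "prod_mset P = f"
    using irreducible_factorization_exists \<open>f \<noteq> 0\<close> \<open>\<not> is_unit f\<close> by blast
  moreover have "irreducible f" if "j = 1 \<or> j = n - 1"
  proof -
    have "P \<noteq> {#}" using P(2) \<open>\<not> is_unit f\<close> by auto
    moreover have "size P \<le> 1" using factor_count[OF P] that by auto
    ultimately have "size P = 1" by (simp add: le_Suc_eq)
    then obtain p where "P = {#p#}" by (metis size_1_singleton_mset)
    then show ?thesis using P by simp
  qed
  ultimately show ?thesis using factor_count by blast
qed

end
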